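(* Let $k\geq2$ and let $L=(l_1,\dots,l_k)$ be positive real numbers with $l_1+\dots+l_k=1$ such that $p_1l_1+\dots+p_kl_k\neq0$ for every $p\in\mathbb{Z}^k\setminus\{0\}$. Then every connected component $Tonn^{\infty,k}(L)$ of the full irrational tonnetz $F\text{-}Tonn^{\infty,k}(L)$ is isomorphic as a simplicial complex to the Delone triangulation $\mathcal{D}_\Lambda$ associated with the permutohedral lattice $\Lambda\cong\mathbb{A}^\ast_{k-1}$.
   Context: $C=\mathbb{R}/\mathbb{Z}$ is the circle with its group structure. A finite subset of $C$ is $L$-admissible if it is a subset of some $\Delta(x;\sigma)=\{x,\,x+l_{\sigma(1)},\,x+l_{\sigma(1)}+l_{\sigma(2)},\dots,x+l_{\sigma(1)}+\dots+l_{\sigma(k-1)}\}$ with $x\in C$, $\sigma\in S_k$. The full irrational tonnetz $F\text{-}Tonn^{\infty,k}(L)$ is the $(k-1)$-dimensional simplicial complex (vertex set $C$) of all $L$-admissible subsets; $Tonn^{\infty,k}(L)$ denotes any of its connected components. $\Lambda=\{x\in\mathbb{Z}^k:\sum x_i=0,\text{ all }x_i\text{ congruent mod }k\}$, $a_i=ke_i-(1,\dots,1)$, $a_I=\sum_{i\in I}a_i$. $\mathcal{D}_\Lambda$ is the simplicial complex with vertex set $\Lambda$ whose simplices are the sets $\{z+a_{I_1},\dots,z+a_{I_s}\}$ with $z\in\Lambda$ and $I_1\subsetneq\dots\subsetneq I_s\subsetneq[k]$. *)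

theory Defs
  imports Complex_Main "HOL-Number_Theory.Cong" "HOL-Combinatorics.Permutations" "HOL-Library.FuncSet"
begin

text \<open>The circle C = R/Z is represented by its fundamental domain [0,1); the group
operation is addition followed by frac.  Indices are 0..<k instead of 1..k.\<close>

definition circle :: "real set" where
  "circle = {0..<1}"

definition Delta :: "nat \<Rightarrow> (nat \<Rightarrow> real) \<Rightarrow> real \<Rightarrow> (nat \<Rightarrow> nat) \<Rightarrow> real set" where
  "Delta k L x \<sigma> = {frac (x + (\<Sum>j<i. L (\<sigma> j))) | i. i < k}"

definition admissible :: "nat \<Rightarrow> (nat \<Rightarrow> real) \<Rightarrow> real set \<Rightarrow> bool" where
  "admissible k L S \<longleftrightarrow> finite S \<and>
     (\<exists>x\<in>circle. \<exists>\<sigma>. \<sigma> permutes {0..<k} \<and> S \<subseteq> Delta k L x \<sigma>)"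

definition full_tonnetz :: "nat \<Rightarrow> (nat \<Rightarrow> real) \<Rightarrow> real set set" where
  "full_tonnetz k L = {S. S \<noteq> {} \<and> admissible k L S}"

text \<open>Connectivity via the 1-skeleton; a connected component is given by its vertex set.\<close>
definition tonnetz_edge :: "nat \<Rightarrow> (nat \<Rightarrow> real) \<Rightarrow> real \<Rightarrow> real \<Rightarrow> bool" where
  "tonnetz_edge k L u v \<longleftrightarrow> u \<noteq> v \<and> {u, v} \<in> full_tonnetz k L"

definition tonnetz_component :: "nat \<Rightarrow> (nat \<Rightarrow> real) \<Rightarrow> real set \<Rightarrow> bool" where
  "tonnetz_component k L V \<longleftrightarrow>
     (\<exists>x0\<in>circle. V = {y. (tonnetz_edge k L)\<^sup>*\<^sup>* x0 y})"

definition tonnetz_restrict :: "nat \<Rightarrow> (nat \<Rightarrow> real) \<Rightarrow> real set \<Rightarrow> real set set" where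
  "tonnetz_restrict k L V = {S \<in> full_tonnetz k L. S \<subseteq> V}"

text \<open>Vectors of Z^k as functions nat => int vanishing outside 0..<k.\<close>
definition zvec :: "nat \<Rightarrow> (nat \<Rightarrow> int) set" where
  "zvec k = {x. \<forall>i\<ge>k. x i = 0}"

definition Lambda :: "nat \<Rightarrow> (nat \<Rightarrow> int) set" where
  "Lambda k = {x \<in> zvec k. (\<Sum>i<k. x i) = 0 \<and>
                  (\<forall>i<k. \<forall>j<k. [x i = x j] (mod int k))}"

definition avec :: "nat \<Rightarrow> nat \<Rightarrow> (nat \<Rightarrow> int)" where
  "avec k i = (\<lambda>j. if j < k then int k * (if j = i then 1 else 0) - 1 else 0)"

definition aset :: "nat \<Rightarrow> nat set \<Rightarrow> (nat \<Rightarrow> int)" where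
  "aset k I = (\<lambda>j. \<Sum>i\<in>I. avec k i j)"

text \<open>A chain I_1 < ... < I_s < [k] (s \<ge> 1) is represented as a nonempty set of proper
subsets of {0..<k} totally ordered by inclusion.\<close>
definition proper_chain :: "nat \<Rightarrow> nat set set \<Rightarrow> bool" where
  "proper_chain k \<I> \<longleftrightarrow> \<I> \<noteq> {} \<and> (\<forall>I\<in>\<I>. I \<subset> {0..<k}) \<and>
     (\<forall>I\<in>\<I>. \<forall>J\<in>\<I>. I \<subseteq> J \<or> J \<subseteq> I)"

definition delone :: "nat \<Rightarrow> (nat \<Rightarrow> int) set set" where
  "delone k = {(\<lambda>I. (\<lambda>j. z j + aset k I j)) ` \<I> | z \<I>. z \<in> Lambda k \<and> proper_chain k \<I>}"

definition simp_iso :: "'a set \<Rightarrow> 'a set set \<Rightarrow> 'b set \<Rightarrow> 'b set set \<Rightarrow> ('a \<Rightarrow> 'b) \<Rightarrow> bool" where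
  "simp_iso V K V' K' f \<longleftrightarrow> bij_betw f V V' \<and> (\<forall>S. S \<subseteq> V \<longrightarrow> (S \<in> K \<longleftrightarrow> f ` S \<in> K'))"

end

theory Submission
  imports Defs "HOL-Library.Indicator_Function" "HOL-Library.Function_Algebras"
begin

text \<open>Fix a vertex x0 of the component. Both maps
  n \<mapsto> x0 + \<langle>L, n\<rangle> (mod 1) from Z^k to the circle and n \<mapsto> k n - (\<Sum>n) (1,\<dots>,1) from Z^k
  onto \<Lambda> have kernel \<int>(1,\<dots>,1): the first because the l_i are rationally independent apart
  from \<Sum>l_i = 1, the second by inspection. So the second map factors through the first,
  giving a bijection from the image of the first map onto \<Lambda>. The vertices of \<Delta>(x0 + \<langle>L, n\<rangle>; \<sigma>)
  are the images of n + 1_{\<sigma>[0..i)}, and 1_I is sent to a_I, so admissible sets correspond exactly to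
  the sets z + a_I with I running through a chain of proper subsets. Finally, the image of the
  first map is a whole component, because the images of n and n + e_i are always joined by an edge.\<close>

lemma frac_eq_frac_iff: "frac a = frac b \<longleftrightarrow> (\<exists>c::int. a - b = of_int c)"
proof
  assume "frac a = frac b"
  then obtain c where "a = b + of_int c" by (rule frac_eqE)
  then show "\<exists>c::int. a - b = of_int c" by auto
next
  assume "\<exists>c::int. a - b = of_int c"
  then obtain c where "a = b + of_int c" by (auto simp: algebra_simps)
  then show "frac a = frac b" by simp
qed

lemma Delta_eq_image: "Delta k L x \<sigma> = (\<lambda>i. frac (x + (\<Sum>j<i. L (\<sigma> j)))) ` {..<k}"
  unfolding Delta_def by auto

lemma Delta_finite: "finite (Delta k L x \<sigma>)"
  by (simp add: Delta_eq_image)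

lemma tonnetz_edge_sym: "tonnetz_edge k L u v \<Longrightarrow> tonnetz_edge k L v u"
  unfolding tonnetz_edge_def by (auto simp: insert_commute)

lemma delone_memI:
  "z \<in> Lambda k \<Longrightarrow> proper_chain k \<I> \<Longrightarrow> (\<lambda>I. z + aset k I) ` \<I> \<in> delone k"
  unfolding delone_def plus_fun_def by blast

lemma delone_memE:
  assumes "D \<in> delone k"
  obtains z \<I> where "z \<in> Lambda k" "proper_chain k \<I>" "D = (\<lambda>I. z + aset k I) ` \<I>"
  using assms unfolding delone_def plus_fun_def by blast

section \<open>Chains of subsets as initial segments of an enumeration\<close>

lemma chain_subset_enumeration:
  assumes "finite A" "card A = n" "\<forall>I\<in>\<C>. I \<subseteq> A" "chain\<^sub>\<subseteq> \<C>"
  shows "\<exists>\<tau>. bij_betw \<tau> {..<n} A \<and> (\<forall>I\<in>\<C>. I = \<tau> ` {..<card I})"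
  using assms
proof (induction n arbitrary: A \<C>)
  case 0
  then show ?case by (intro exI[of _ "\<lambda>_. undefined"]) (auto simp: bij_betw_def)
next
  case (Suc m)
  have "finite \<C>"
    using Suc.prems(1,3) by (meson Pow_iff finite_Pow_iff finite_subset subsetI)
  have chain: "chain\<^sub>\<subseteq> (\<C> - {A})"
    using Suc.prems(4) by (auto simp: chain_subset_def)
  have "\<Union>(\<C> - {A}) \<noteq> A"
  proof (cases "\<C> - {A} = {}")
    case True
    have "A \<noteq> {}" using Suc.prems(2) by auto
    then show ?thesis unfolding True by simp
  next
    case False
    from chain have "\<Union>(\<C> - {A}) \<in> \<C> - {A}"
      unfolding chain_subset_alt_def using \<open>finite \<C>\<close> False by (intro Union_in_chain) auto
    then show ?thesis by blast
  qed
  then obtain a where a: "a \<in> A" "\<forall>I\<in>\<C> - {A}. a \<notin> I"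
    using Suc.prems(3) by blast
  have "finite (A - {a})" "card (A - {a}) = m" "\<forall>I\<in>\<C> - {A}. I \<subseteq> A - {a}"
    using Suc.prems a by auto
  then obtain \<tau> where \<tau>: "bij_betw \<tau> {..<m} (A - {a})" "\<forall>I\<in>\<C> - {A}. I = \<tau> ` {..<card I}"
    using Suc.IH chain by blast
  define \<tau>' where "\<tau>' = \<tau>(m := a)"
  have \<tau>'_lessThan: "\<tau>' ` {..<c} = \<tau> ` {..<c}" if "c \<le> m" for c
    using that unfolding \<tau>'_def by (auto simp: image_def)
  have "bij_betw \<tau>' {..<m} (A - {a})"
    using \<tau>(1) by (rule bij_betw_cong[THEN iffD1, rotated]) (simp add: \<tau>'_def)
  then have "bij_betw \<tau>' ({..<m} \<union> {m}) ((A - {a}) \<union> {\<tau>' m})"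
    by (intro notIn_Un_bij_betw) (auto simp: \<tau>'_def)
  moreover have "{..<m} \<union> {m} = {..<Suc m}" "(A - {a}) \<union> {\<tau>' m} = A"
    using a(1) by (auto simp: \<tau>'_def)
  ultimately have "bij_betw \<tau>' {..<Suc m} A"
    by simp
  moreover have "I = \<tau>' ` {..<card I}" if "I \<in> \<C>" for I
  proof (cases "I = A")
    case True
    then show ?thesis using \<open>bij_betw \<tau>' {..<Suc m} A\<close> Suc.prems(2) by (simp add: bij_betw_def)
  next
    case False
    then have "I \<subseteq> A - {a}" using that a Suc.prems(3) by auto
    then have "card I \<le> m"
      using Suc.prems(1,2) by (metis card_Diff_singleton a(1) card_mono finite_Diff diff_Suc_1)
    then show ?thesis using \<tau>'_lessThan \<tau>(2) that False by auto
  qed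
  ultimately show ?case by blast
qed

lemma card_permutes_image_lessThan: "\<sigma> permutes S \<Longrightarrow> card (\<sigma> ` {..<i}) = i"
  by (metis card_image card_lessThan inj_on_subset permutes_inj subset_UNIV)

lemma permutes_image_lessThan_subset:
  fixes i k :: nat
  assumes "\<sigma> permutes {0..<k}" "i \<le> k"
  shows "\<sigma> ` {..<i} \<subseteq> {..<k}"
proof -
  have "{..<i} \<subseteq> {0..<k}" using assms(2) by auto
  then have "\<sigma> ` {..<i} \<subseteq> \<sigma> ` {0..<k}" by (rule image_mono)
  then show ?thesis using permutes_image[OF assms(1)] by auto
qed

lemma proper_chain_initial_segments:
  assumes "proper_chain k \<I>"
  obtains \<sigma> where "\<sigma> permutes {0..<k}" "\<forall>I\<in>\<I>. \<exists>i<k. I = \<sigma> ` {..<i}"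
proof -
  obtain \<tau> where \<tau>: "bij_betw \<tau> {..<k} {0..<k}" "\<forall>I\<in>\<I>. I = \<tau> ` {..<card I}"
    using chain_subset_enumeration[of "{0..<k}" k \<I>] assms
    unfolding proper_chain_def chain_subset_def by auto
  define \<sigma> where "\<sigma> i = (if i < k then \<tau> i else i)" for i
  have "bij_betw \<sigma> {0..<k} {0..<k}"
    using \<tau>(1) unfolding \<sigma>_def by (subst bij_betw_cong[where g=\<tau>]) (auto simp: atLeast0LessThan)
  then have "\<sigma> permutes {0..<k}"
    by (rule bij_imp_permutes) (simp add: \<sigma>_def)
  moreover have "\<forall>I\<in>\<I>. \<exists>i<k. I = \<sigma> ` {..<i}"
  proof (intro ballI exI conjI)
    fix I assume I: "I \<in> \<I>"
    have "I \<subset> {0..<k}" using I assms unfolding proper_chain_def by blast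
    then show "card I < k" by (metis card_atLeastLessThan finite_atLeastLessThan psubset_card_mono diff_zero)
    have "I = \<tau> ` {..<card I}" using \<tau>(2) I by blast
    also have "\<dots> = \<sigma> ` {..<card I}"
      using \<open>card I < k\<close> unfolding \<sigma>_def by (intro image_cong) auto
    finally show "I = \<sigma> ` {..<card I}" .
  qed
  ultimately show ?thesis by (rule that)
qed

lemma initial_segments_proper_chain:
  fixes k :: nat
  assumes "\<sigma> permutes {0..<k}" "\<I> \<noteq> {}" "\<forall>I\<in>\<I>. \<exists>i<k. I = \<sigma> ` {..<i}"
  shows "proper_chain k \<I>"
  unfolding proper_chain_def
proof (intro conjI ballI)
  fix I assume "I \<in> \<I>"
  then obtain i where i: "i < k" "I = \<sigma> ` {..<i}" using assms(3) by blast
  then have "I \<subseteq> {0..<k}" using permutes_image_lessThan_subset[OF assms(1)] by fastforce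
  moreover have "card I \<noteq> card {0..<k}" using i card_permutes_image_lessThan[OF assms(1)] by simp
  ultimately show "I \<subset> {0..<k}" by auto
next
  fix I J assume "I \<in> \<I>" "J \<in> \<I>"
  then show "I \<subseteq> J \<or> J \<subseteq> I"
    using assms(3) by (metis image_mono lessThan_subset_iff nat_le_linear)
qed (rule assms(2))

section \<open>Coordinates on a component\<close>

locale irrational_tonnetz =
  fixes k :: nat and L :: "nat \<Rightarrow> real" and x0 :: real
  assumes k_ge_2: "k \<ge> 2"
    and L_sum: "(\<Sum>i<k. L i) = 1"
    and L_independent: "\<forall>p :: nat \<Rightarrow> int. (\<exists>i<k. p i \<noteq> 0) \<longrightarrow> (\<Sum>i<k. of_int (p i) * L i) \<noteq> 0"
    and x0_circle: "x0 \<in> circle"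
begin

definition dot_L :: "(nat \<Rightarrow> int) \<Rightarrow> real" where
  "dot_L n = (\<Sum>i<k. of_int (n i) * L i)"

definition to_circle :: "(nat \<Rightarrow> int) \<Rightarrow> real" where
  "to_circle n = frac (x0 + dot_L n)"

definition to_Lambda :: "(nat \<Rightarrow> int) \<Rightarrow> nat \<Rightarrow> int" where
  "to_Lambda n = (\<lambda>j. if j < k then int k * n j - (\<Sum>i<k. n i) else 0)"

definition lattice_coord :: "real \<Rightarrow> nat \<Rightarrow> int" where
  "lattice_coord v = to_Lambda (inv to_circle v)"

lemma dot_L_add: "dot_L (n + m) = dot_L n + dot_L m"
  unfolding dot_L_def by (simp add: distrib_right sum.distrib)

lemma dot_L_uminus: "dot_L (- n) = - dot_L n"
  unfolding dot_L_def by (simp add: sum_negf)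

lemma dot_L_diff: "dot_L (n - m) = dot_L n - dot_L m"
  unfolding dot_L_def by (simp add: left_diff_distrib sum_subtractf)

lemma dot_L_const: "dot_L (\<lambda>_. c) = of_int c"
  unfolding dot_L_def by (simp add: sum_distrib_left[symmetric] L_sum)

lemma dot_L_eq_0_iff: "dot_L n = 0 \<longleftrightarrow> (\<forall>i<k. n i = 0)"
  using L_independent unfolding dot_L_def by auto

lemma dot_L_indicator:
  assumes "J \<subseteq> {..<k}"
  shows "dot_L (indicator J) = (\<Sum>i\<in>J. L i)"
proof -
  have "dot_L (indicator J) = (\<Sum>i<k. indicator J i * L i)"
    unfolding dot_L_def by (intro sum.cong) (auto simp: indicator_def)
  then show ?thesis using assms by (simp add: Int_absorb1)
qed

lemma sum_permutes_eq_dot_L: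
  assumes "\<sigma> permutes {0..<k}" "i \<le> k"
  shows "(\<Sum>j<i. L (\<sigma> j)) = dot_L (indicator (\<sigma> ` {..<i}))"
proof -
  have "inj_on \<sigma> {..<i}" using inj_on_subset[OF permutes_inj[OF assms(1)] subset_UNIV] .
  then have "(\<Sum>j<i. L (\<sigma> j)) = (\<Sum>j\<in>\<sigma> ` {..<i}. L j)" by (simp add: sum.reindex)
  then show ?thesis using dot_L_indicator permutes_image_lessThan_subset[OF assms] by simp
qed

lemma to_circle_in_circle: "to_circle n \<in> circle"
  unfolding circle_def to_circle_def using frac_lt_1 frac_ge_0 by auto

lemma frac_to_circle_add: "frac (to_circle n + dot_L m) = to_circle (n + m)"
  unfolding to_circle_def dot_L_add by (simp add: add.assoc)

lemma to_circle_eq_iff: "to_circle n = to_circle m \<longleftrightarrow> (\<exists>c. \<forall>i<k. n i - m i = c)"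
proof -
  have "to_circle n = to_circle m \<longleftrightarrow> (\<exists>c::int. dot_L n - dot_L m = of_int c)"
    unfolding to_circle_def frac_eq_frac_iff by (simp add: algebra_simps)
  also have "\<dots> \<longleftrightarrow> (\<exists>c::int. dot_L (n - m - (\<lambda>_. c)) = 0)"
    by (simp add: dot_L_diff dot_L_const)
  also have "\<dots> \<longleftrightarrow> (\<exists>c. \<forall>i<k. n i - m i = c)"
    by (simp add: dot_L_eq_0_iff)
  finally show ?thesis .
qed

lemma to_Lambda_eq_iff: "to_Lambda n = to_Lambda m \<longleftrightarrow> (\<exists>c. \<forall>i<k. n i - m i = c)"
proof
  assume eq: "to_Lambda n = to_Lambda m"
  have "n i - m i = n 0 - m 0" if "i < k" for i
  proof -
    have "to_Lambda n i = to_Lambda m i" "to_Lambda n 0 = to_Lambda m 0" using eq by auto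
    then have "int k * (n i - m i) = int k * (n 0 - m 0)"
      using that unfolding to_Lambda_def by (auto simp: algebra_simps)
    then show ?thesis using that by simp
  qed
  then show "\<exists>c. \<forall>i<k. n i - m i = c" by blast
next
  assume "\<exists>c. \<forall>i<k. n i - m i = c"
  then obtain c where c: "\<forall>i<k. n i = m i + c" by (auto simp: algebra_simps)
  then have "(\<Sum>i<k. n i) = (\<Sum>i<k. m i) + int k * c"
    by (simp add: sum.distrib)
  then show "to_Lambda n = to_Lambda m"
    using c unfolding to_Lambda_def by (auto simp: algebra_simps)
qed

lemma to_circle_eq_iff_to_Lambda_eq: "to_circle n = to_circle m \<longleftrightarrow> to_Lambda n = to_Lambda m"
  by (simp add: to_circle_eq_iff to_Lambda_eq_iff)

lemma to_Lambda_add: "to_Lambda (n + m) = to_Lambda n + to_Lambda m"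
  unfolding to_Lambda_def by (auto simp: fun_eq_iff sum.distrib distrib_left)

lemma to_Lambda_indicator:
  assumes "J \<subseteq> {..<k}"
  shows "to_Lambda (indicator J) = aset k J"
proof
  fix j
  have "finite J" using assms finite_subset by blast
  have "(\<Sum>i<k. indicator J i) = int (card J)"
    using sum_indicator_mult[of "{..<k}" J "\<lambda>_. 1::int"] assms by (simp add: Int_absorb1)
  moreover have "aset k J j = (if j < k then int k * indicator J j - int (card J) else 0)"
    using \<open>finite J\<close> unfolding aset_def avec_def
    by (auto simp: sum_subtractf sum_distrib_left[symmetric] indicator_def)
  ultimately show "to_Lambda (indicator J) j = aset k J j"
    unfolding to_Lambda_def by simp
qed

lemma to_Lambda_in_Lambda: "to_Lambda n \<in> Lambda k"
  unfolding Lambda_def zvec_def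
proof (intro CollectI conjI allI impI)
  show "to_Lambda n i = 0" if "k \<le> i" for i
    using that unfolding to_Lambda_def by simp
  show "(\<Sum>i<k. to_Lambda n i) = 0"
    unfolding to_Lambda_def by (simp add: sum_subtractf sum_distrib_left)
  show "[to_Lambda n i = to_Lambda n j] (mod int k)" if "i < k" "j < k" for i j
    using that unfolding to_Lambda_def cong_iff_dvd_diff by (simp add: right_diff_distrib[symmetric])
qed

lemma Lambda_in_range_to_Lambda:
  assumes x: "x \<in> Lambda k"
  shows "x \<in> range to_Lambda"
proof -
  have "int k dvd x j - x 0" if "j < k" for j
    using x that k_ge_2 unfolding Lambda_def cong_iff_dvd_diff by auto
  then obtain n where n: "\<And>j. j < k \<Longrightarrow> x j - x 0 = int k * n j"
    unfolding dvd_def by metis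
  have "int k * (\<Sum>j<k. n j) = (\<Sum>j<k. x j - x 0)"
    by (simp add: sum_distrib_left n)
  also have "\<dots> = int k * (- x 0)"
    using x unfolding Lambda_def by (simp add: sum_subtractf)
  finally have "int k * (\<Sum>j<k. n j) = int k * (- x 0)" .
  moreover have "int k \<noteq> 0" using k_ge_2 by simp
  ultimately have "(\<Sum>j<k. n j) = - x 0" by (metis mult_left_cancel)
  then have "to_Lambda n = x"
    using x n[symmetric] unfolding to_Lambda_def Lambda_def zvec_def by (auto simp: fun_eq_iff)
  then show ?thesis by blast
qed

lemma range_to_Lambda: "range to_Lambda = Lambda k"
  using to_Lambda_in_Lambda Lambda_in_range_to_Lambda by blast

lemma Delta_to_circle:
  assumes "\<sigma> permutes {0..<k}"
  shows "Delta k L (to_circle n) \<sigma> = (\<lambda>i. to_circle (n + indicator (\<sigma> ` {..<i}))) ` {..<k}"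
proof -
  have "frac (to_circle n + (\<Sum>j<i. L (\<sigma> j))) = to_circle (n + indicator (\<sigma> ` {..<i}))"
    if "i < k" for i
    using that sum_permutes_eq_dot_L[OF assms] frac_to_circle_add by simp
  then show ?thesis
    unfolding Delta_eq_image by (intro image_cong) auto
qed

lemma Delta_base_in_range:
  assumes "\<sigma> permutes {0..<k}" "z \<in> circle" "to_circle m \<in> Delta k L z \<sigma>"
  shows "z \<in> range to_circle"
proof -
  obtain i where i: "i < k" "to_circle m = frac (z + (\<Sum>j<i. L (\<sigma> j)))"
    using assms(3) unfolding Delta_def by blast
  define A :: "nat \<Rightarrow> int" where "A = indicator (\<sigma> ` {..<i})"
  have "to_circle (m + - A) = frac (frac (z + dot_L A) + - dot_L A)"
    using i sum_permutes_eq_dot_L[OF assms(1)] frac_to_circle_add[of m "- A"] dot_L_uminus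
    unfolding A_def by simp
  also have "\<dots> = z"
    unfolding frac_add_simps(1) using assms(2) unfolding circle_def by simp
  finally show ?thesis by (metis rangeI)
qed

lemma to_circle_edge:
  assumes "i < k"
  shows "tonnetz_edge k L (to_circle n) (to_circle (n + indicator {i}))"
proof -
  define \<sigma> where "\<sigma> = Transposition.transpose 0 i"
  have \<sigma>: "\<sigma> permutes {0..<k}"
    unfolding \<sigma>_def using assms by (intro permutes_swap_id) auto
  have seg: "n + indicator (\<sigma> ` {..<0}) = n" "\<sigma> ` {..<1} = {i}"
    unfolding \<sigma>_def by (auto simp: fun_eq_iff lessThan_Suc)
  have "to_circle (n + indicator (\<sigma> ` {..<j})) \<in> Delta k L (to_circle n) \<sigma>" if "j < k" for j
    unfolding Delta_to_circle[OF \<sigma>] using that by simp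
  from this[of 0] this[of 1] have "to_circle n \<in> Delta k L (to_circle n) \<sigma>"
    "to_circle (n + indicator {i}) \<in> Delta k L (to_circle n) \<sigma>"
    unfolding seg using k_ge_2 by auto
  then have "{to_circle n, to_circle (n + indicator {i})} \<subseteq> Delta k L (to_circle n) \<sigma>"
    by simp
  moreover have "to_circle n \<noteq> to_circle (n + indicator {i})"
  proof
    assume "to_circle n = to_circle (n + indicator {i})"
    then obtain c where c: "\<forall>j<k. n j - (n + indicator {i}) j = c"
      unfolding to_circle_eq_iff by blast
    define j where "j = (if i = 0 then 1 else (0::nat))"
    have "j < k" "j \<noteq> i"
      unfolding j_def using k_ge_2 by auto
    then have "c = 0"
      using c[rule_format, OF \<open>j < k\<close>] by (simp add: indicator_def)
    moreover have "c = -1"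
      using c[rule_format, OF assms] by (simp add: indicator_def)
    ultimately show False by simp
  qed
  ultimately show ?thesis
    unfolding tonnetz_edge_def full_tonnetz_def admissible_def
    using \<sigma> to_circle_in_circle finite_subset[OF _ Delta_finite] by blast
qed

section \<open>Connectivity\<close>

abbreviation reachable :: "real \<Rightarrow> bool" where
  "reachable \<equiv> (tonnetz_edge k L)\<^sup>*\<^sup>* x0"

lemma to_circle_zero: "to_circle 0 = x0"
  using x0_circle unfolding to_circle_def dot_L_def circle_def by simp

lemma reachable_to_circle_line:
  assumes "reachable (to_circle n)" "i < k"
  shows "reachable (to_circle (n + (\<lambda>j. c * indicator {i} j)))"
proof -
  have step: "n + (\<lambda>j. c * indicator {i} j) + indicator {i} = n + (\<lambda>j. (c + 1) * indicator {i} j)" for c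
    by (auto simp: fun_eq_iff algebra_simps)
  show ?thesis
  proof (induction c rule: int_induct[where k=0])
    case base
    then show ?case using assms(1) by (simp add: fun_eq_iff)
  next
    case (step1 c)
    show ?case
      using step1(2) to_circle_edge[OF assms(2), of "n + (\<lambda>j. c * indicator {i} j)"]
      unfolding step by (rule rtranclp.rtrancl_into_rtrancl)
  next
    case (step2 c)
    have "tonnetz_edge k L (to_circle (n + (\<lambda>j. c * indicator {i} j)))
        (to_circle (n + (\<lambda>j. (c - 1) * indicator {i} j)))"
      using tonnetz_edge_sym[OF to_circle_edge[OF assms(2), of "n + (\<lambda>j. (c - 1) * indicator {i} j)"]]
      unfolding step by simp
    with step2(2) show ?case by (rule rtranclp.rtrancl_into_rtrancl)
  qed
qed

lemma reachable_to_circle: "reachable (to_circle n)"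
proof -
  have "reachable (to_circle (\<lambda>j. if j < m then n j else 0))" for m
  proof (induction m)
    case 0
    then show ?case using to_circle_zero by (simp add: zero_fun_def)
  next
    case (Suc m)
    show ?case
    proof (cases "m < k")
      case True
      have "(\<lambda>j. if j < Suc m then n j else 0) = (\<lambda>j. if j < m then n j else 0) + (\<lambda>j. n m * indicator {m} j)"
        by (auto simp: fun_eq_iff less_Suc_eq)
      then show ?thesis using reachable_to_circle_line[OF Suc.IH True] by simp
    next
      case False
      have "to_circle (\<lambda>j. if j < Suc m then n j else 0) = to_circle (\<lambda>j. if j < m then n j else 0)"
        unfolding to_circle_eq_iff using False by (intro exI[of _ 0]) auto
      then show ?thesis using Suc.IH by simp
    qed
  qed
  moreover have "to_circle (\<lambda>j. if j < k then n j else 0) = to_circle n"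
    unfolding to_circle_eq_iff by (intro exI[of _ 0]) auto
  ultimately show ?thesis by metis
qed

lemma reachable_in_range_to_circle: "reachable y \<Longrightarrow> y \<in> range to_circle"
proof (induction rule: rtranclp_induct)
  case base
  then show ?case using to_circle_zero by (metis rangeI)
next
  case (step y z)
  obtain x \<sigma> where x: "x \<in> circle" "\<sigma> permutes {0..<k}" "{y, z} \<subseteq> Delta k L x \<sigma>"
    using step(2) unfolding tonnetz_edge_def full_tonnetz_def admissible_def by blast
  then obtain n where "x = to_circle n"
    using Delta_base_in_range step(3) by blast
  then show ?case using x Delta_to_circle by auto
qed

lemma component_eq_range_to_circle: "{y. reachable y} = range to_circle"
  using reachable_to_circle reachable_in_range_to_circle by blast

lemma lattice_coord_to_circle: "lattice_coord (to_circle n) = to_Lambda n"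
proof -
  have "to_circle (inv to_circle (to_circle n)) = to_circle n"
    by (simp add: f_inv_into_f)
  then show ?thesis
    unfolding lattice_coord_def to_circle_eq_iff_to_Lambda_eq .
qed

lemma bij_betw_lattice_coord: "bij_betw lattice_coord (range to_circle) (Lambda k)"
proof (rule bij_betw_imageI)
  show "inj_on lattice_coord (range to_circle)"
    by (auto simp: inj_on_def lattice_coord_to_circle to_circle_eq_iff_to_Lambda_eq)
  show "lattice_coord ` range to_circle = Lambda k"
    using range_to_Lambda by (simp add: image_image lattice_coord_to_circle)
qed

lemma to_Lambda_add_indicator:
  assumes "\<sigma> permutes {0..<k}" "i \<le> k"
  shows "to_Lambda (n + indicator (\<sigma> ` {..<i})) = to_Lambda n + aset k (\<sigma> ` {..<i})"
  using to_Lambda_add to_Lambda_indicator permutes_image_lessThan_subset[OF assms] by simp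

lemma simplex_imp_delone:
  assumes "S \<in> full_tonnetz k L" "S \<subseteq> range to_circle"
  shows "lattice_coord ` S \<in> delone k"
proof -
  obtain x \<sigma> where S: "S \<noteq> {}" "x \<in> circle" "\<sigma> permutes {0..<k}" "S \<subseteq> Delta k L x \<sigma>"
    using assms(1) unfolding full_tonnetz_def admissible_def by blast
  then obtain n where x: "x = to_circle n"
    using Delta_base_in_range assms(2) by blast
  define G where "G I = to_circle (n + indicator I)" for I
  have "S \<subseteq> G ` (\<lambda>i. \<sigma> ` {..<i}) ` {..<k}"
    using S(4) unfolding x Delta_to_circle[OF S(3)] image_image G_def .
  then obtain \<I> where \<I>: "\<I> \<subseteq> (\<lambda>i. \<sigma> ` {..<i}) ` {..<k}" and S_eq: "S = G ` \<I>"
    unfolding subset_image_iff by blast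
  have "lattice_coord ` S = (\<lambda>I. to_Lambda n + aset k I) ` \<I>"
    unfolding S_eq image_image G_def lattice_coord_to_circle
    using \<I> to_Lambda_add_indicator[OF S(3)] by (intro image_cong) auto
  moreover have "proper_chain k \<I>"
    using \<I> S(1) S_eq by (intro initial_segments_proper_chain[OF S(3)]) auto
  ultimately show ?thesis
    using delone_memI to_Lambda_in_Lambda by simp
qed

lemma delone_imp_simplex:
  assumes "lattice_coord ` S \<in> delone k" "S \<subseteq> range to_circle"
  shows "S \<in> full_tonnetz k L"
proof -
  obtain z \<I> where z: "z \<in> Lambda k" and \<I>: "proper_chain k \<I>"
    and img: "lattice_coord ` S = (\<lambda>I. z + aset k I) ` \<I>"
    using assms(1) by (rule delone_memE)
  obtain n where n: "z = to_Lambda n"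
    using z range_to_Lambda by blast
  obtain \<sigma> where \<sigma>: "\<sigma> permutes {0..<k}" "\<forall>I\<in>\<I>. \<exists>i<k. I = \<sigma> ` {..<i}"
    using \<I> by (rule proper_chain_initial_segments)
  have "s \<in> Delta k L (to_circle n) \<sigma>" if s: "s \<in> S" for s
  proof -
    obtain m where m: "s = to_circle m"
      using subsetD[OF assms(2) s] by (rule rangeE)
    have "lattice_coord s \<in> (\<lambda>I. z + aset k I) ` \<I>"
      using s unfolding img[symmetric] by (rule imageI)
    then obtain I where I: "I \<in> \<I>" "to_Lambda m = z + aset k I"
      unfolding m lattice_coord_to_circle by (rule imageE)
    then obtain i where i: "i < k" "I = \<sigma> ` {..<i}"
      using \<sigma>(2) by blast
    then have "to_Lambda m = to_Lambda (n + indicator (\<sigma> ` {..<i}))"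
      using I(2) n to_Lambda_add_indicator[OF \<sigma>(1)] by simp
    then have "s = to_circle (n + indicator (\<sigma> ` {..<i}))"
      unfolding m to_circle_eq_iff_to_Lambda_eq .
    then show ?thesis
      unfolding Delta_to_circle[OF \<sigma>(1)] using i(1) by (intro image_eqI[where x=i]) auto
  qed
  moreover have "S \<noteq> {}"
    using img \<I> unfolding proper_chain_def by auto
  ultimately show ?thesis
    unfolding full_tonnetz_def admissible_def
    using \<sigma>(1) to_circle_in_circle finite_subset[OF _ Delta_finite] by blast
qed

lemma simp_iso_component:
  "simp_iso {y. reachable y} (tonnetz_restrict k L {y. reachable y}) (Lambda k) (delone k) lattice_coord"
  unfolding simp_iso_def tonnetz_restrict_def component_eq_range_to_circle
  using bij_betw_lattice_coord simplex_imp_delone delone_imp_simplex by blast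

end

theorem theorem6p5:
  fixes k :: nat and L :: "nat \<Rightarrow> real"
  assumes "k \<ge> 2"
    and "\<forall>i<k. L i > 0"
    and "(\<Sum>i<k. L i) = 1"
    and "\<forall>p :: nat \<Rightarrow> int. (\<exists>i<k. p i \<noteq> 0) \<longrightarrow> (\<Sum>i<k. of_int (p i) * L i) \<noteq> 0"
    and "tonnetz_component k L V"
  shows "\<exists>f. simp_iso V (tonnetz_restrict k L V) (Lambda k) (delone k) f"
proof -
  obtain x0 where "x0 \<in> circle" and V: "V = {y. (tonnetz_edge k L)\<^sup>*\<^sup>* x0 y}"
    using assms(5) unfolding tonnetz_component_def by blast
  then interpret irrational_tonnetz k L x0
    using assms(1,3,4) by unfold_locales
  show ?thesis
    unfolding V using simp_iso_component by blast
qed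

end
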